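(* In the setting described in the context, let $v\in\operatorname{Lip}_1(X_h)$ and $\lambda\in\mathbb{R}$ satisfy $\hat F_h^+v=\lambda+v$. Then $\lambda-h\le\rho\le\lambda$, where $\rho$ is the value of the escape rate game played on $\operatorname{Int}C$ with the maps $T_{ab}$.
   Context: Let $C\subset\mathbb{R}^n$ be a pointed closed convex cone, $C^*$ its dual cone, $e^*\in\operatorname{int}C^*$, and $\Delta=\{x\in C:\langle x,e^*\rangle=1\}$. $x\le_C y$ means $y-x\in C$; $\operatorname{Funk}(x,y)=\log\inf\{\lambda>0:x\le_C\lambda y\}$ on $\operatorname{Int}C$; $\operatorname{Hil}(x,y)=\operatorname{Funk}(x,y)+\operatorname{Funk}(y,x)$. Let $\mathcal{A},\mathcal{B}$ be nonempty compact action sets and $(T_{ab})_{(a,b)\in\mathcal{A}\times\mathcal{B}}$ self-maps of $\operatorname{Int}C$ nonexpansive for $\operatorname{Funk}$ (i.e. $\operatorname{Funk}(T_{ab}x,T_{ab}y)\le\operatorname{Funk}(x,y)$), such that for each $x$ the maps $a\mapsto T_{ab}(x)$, $b\mapsto T_{ab}(x)$ are continuous, for each compact $K$ the set $\{T_{ab}(x):(a,b,x)\in\mathcal{A}\times\mathcal{B}\times K\}$ is compact, and each $T_{ab}$ extends continuously (Euclidean topology) to $C$. Small cone assumption: there is a closed cone $K\subset C$ with $T_{ab}(K)\subset K$ for all $a,b$ and $X:=K\cap\Delta\subset\operatorname{relint}\Delta$. For $h>0$, $X_h\subset X$ is a finite set with $X\subset\bigcup_{y\in X_h}\{x:\operatorname{Hil}(x,y)<h\}$.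 $\operatorname{Lip}_1(Y)$ is the set of $f:Y\to\mathbb{R}$ with $f(x)-f(y)\le\operatorname{Funk}(x,y)$ for $x,y\in Y$. $F$ maps $v\in\operatorname{Lip}_1(X)$ to $Fv(x)=\inf_{a\in\mathcal{A}}\sup_{b\in\mathcal{B}}\big[\log\langle T_{ab}(x),e^*\rangle+v\big(T_{ab}(x)/\langle T_{ab}(x),e^*\rangle\big)\big]$; $I_h^+v(x)=\min_{y\in X_h}[v(y)+\operatorname{Funk}(x,y)]$ for $v\in\mathbb{R}^{X_h}$, $x\in X$; $R_h$ is restriction to $X_h$; $\hat F_h^+=R_hFI_h^+$. Escape rate game: from $x_0\in\operatorname{Int}C$, at each turn $k\ge1$ Min chooses $a_k\in\mathcal{A}$, then Max, after observing it, chooses $b_k\in\mathcal{B}$, and $x_k=T_{a_kb_k}(x_{k-1})$. Strategies map finite histories to actions; payoff $J(\sigma,\tau)=\limsup_k\frac1k\operatorname{Funk}(x_k,x_0)$, minimized by Min, maximized by Max. The value $\rho$ is the number such that for every $\epsilon>0$ there exist strategies $\sigma^*,\tau^*$ with $J(\sigma^*,\tau)\le\rho+\epsilon$ and $J(\sigma,\tau^* )\ge\rho-\epsilon$ for all $\sigma,\tau$. *)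

theory Defs
  imports "HOL-Analysis.Analysis"
begin

definition dual_cone :: "'a::euclidean_space set \<Rightarrow> 'a set" where
  "dual_cone C = {y. \<forall>x\<in>C. 0 \<le> x \<bullet> y}"

definition pointed_cone :: "'a::euclidean_space set \<Rightarrow> bool" where
  "pointed_cone C \<longleftrightarrow> cone C \<and> C \<inter> uminus ` C \<subseteq> {0}"

definition cross_section :: "'a::euclidean_space set \<Rightarrow> 'a \<Rightarrow> 'a set" where
  "cross_section C e = {x\<in>C. x \<bullet> e = 1}"

definition Funk :: "'a::euclidean_space set \<Rightarrow> 'a \<Rightarrow> 'a \<Rightarrow> real" where
  "Funk C x y = ln (Inf {l. l > 0 \<and> l *\<^sub>R y - x \<in> C})"

definition Hil :: "'a::euclidean_space set \<Rightarrow> 'a \<Rightarrow> 'a \<Rightarrow> real" where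
  "Hil C x y = Funk C x y + Funk C y x"

text \<open>Lip_1(Y): functions on Y (represented as total functions, only values on Y matter).\<close>
definition Lip1 :: "'a::euclidean_space set \<Rightarrow> 'a set \<Rightarrow> ('a \<Rightarrow> real) set" where
  "Lip1 C Y = {f. \<forall>x\<in>Y. \<forall>y\<in>Y. f x - f y \<le> Funk C x y}"

definition ShapleyF :: "'b set \<Rightarrow> 'c set \<Rightarrow> ('b \<Rightarrow> 'c \<Rightarrow> 'a::euclidean_space \<Rightarrow> 'a) \<Rightarrow> 'a
    \<Rightarrow> ('a \<Rightarrow> real) \<Rightarrow> 'a \<Rightarrow> real" where
  "ShapleyF A B T e w x =
     (INF a\<in>A. SUP b\<in>B. ln (T a b x \<bullet> e) + w ((1 / (T a b x \<bullet> e)) *\<^sub>R T a b x))"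

definition Iplus :: "'a::euclidean_space set \<Rightarrow> 'a set \<Rightarrow> ('a \<Rightarrow> real) \<Rightarrow> 'a \<Rightarrow> real" where
  "Iplus C Xh v x = Min ((\<lambda>y. v y + Funk C x y) ` Xh)"

text \<open>Histories are lists of past action pairs (the states are determined
  by x0 and the actions). Min's strategy maps a history to an action; Max's strategy maps a
  history and Min's current action to an action.\<close>
fun game_hist :: "(('b \<times> 'c) list \<Rightarrow> 'b) \<Rightarrow> (('b \<times> 'c) list \<Rightarrow> 'b \<Rightarrow> 'c) \<Rightarrow> nat \<Rightarrow> ('b \<times> 'c) list" where
  "game_hist \<sigma> \<tau> 0 = []"
| "game_hist \<sigma> \<tau> (Suc k) =
     game_hist \<sigma> \<tau> k @ [(\<sigma> (game_hist \<sigma> \<tau> k), \<tau> (game_hist \<sigma> \<tau> k) (\<sigma> (game_hist \<sigma> \<tau> k)))]"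

definition game_state :: "('b \<Rightarrow> 'c \<Rightarrow> 'a \<Rightarrow> 'a) \<Rightarrow> 'a \<Rightarrow> ('b \<times> 'c) list \<Rightarrow> 'a" where
  "game_state T x0 h = foldl (\<lambda>x ab. T (fst ab) (snd ab) x) x0 h"

definition escape_payoff :: "'a::euclidean_space set \<Rightarrow> ('b \<Rightarrow> 'c \<Rightarrow> 'a \<Rightarrow> 'a) \<Rightarrow> 'a
    \<Rightarrow> (('b \<times> 'c) list \<Rightarrow> 'b) \<Rightarrow> (('b \<times> 'c) list \<Rightarrow> 'b \<Rightarrow> 'c) \<Rightarrow> ereal" where
  "escape_payoff C T x0 \<sigma> \<tau> =
     limsup (\<lambda>k. ereal (Funk C (game_state T x0 (game_hist \<sigma> \<tau> k)) x0 / real k))"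

definition min_strategies :: "'b set \<Rightarrow> (('b \<times> 'c) list \<Rightarrow> 'b) set" where
  "min_strategies A = {\<sigma>. \<forall>h. \<sigma> h \<in> A}"

definition max_strategies :: "'c set \<Rightarrow> (('b \<times> 'c) list \<Rightarrow> 'b \<Rightarrow> 'c) set" where
  "max_strategies B = {\<tau>. \<forall>h a. \<tau> h a \<in> B}"

definition is_escape_value :: "'a::euclidean_space set \<Rightarrow> 'b set \<Rightarrow> 'c set
    \<Rightarrow> ('b \<Rightarrow> 'c \<Rightarrow> 'a \<Rightarrow> 'a) \<Rightarrow> 'a \<Rightarrow> real \<Rightarrow> bool" where
  "is_escape_value C A B T x0 \<rho> \<longleftrightarrow>
     (\<forall>\<epsilon>>0. \<exists>\<sigma>s\<in>min_strategies A. \<exists>\<tau>s\<in>max_strategies B.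
        (\<forall>\<tau>\<in>max_strategies B. escape_payoff C T x0 \<sigma>s \<tau> \<le> ereal (\<rho> + \<epsilon>)) \<and>
        (\<forall>\<sigma>\<in>min_strategies A. ereal (\<rho> - \<epsilon>) \<le> escape_payoff C T x0 \<sigma> \<tau>s))"

end

(*
  The upper interpolant w = I_h^+ v is 1-Lipschitz for the Funk metric on Int C and satisfies
  w (c x) = ln c + w x, so the fixed-point equation on the net X_h reads
  inf_a sup_b w (T_ab x) = lam + v x there.  Transporting it along Funk-nonexpansive maps gives,
  at every state y, an action of Min with w (T_ab y) <= w y + lam + eps for all b, and, at every
  y in K (compared with a net point at Hilbert distance < h), a reply of Max to every a with
  w (T_ab y) >= w y + lam - h - eps.  Playing these one-step choices makes w grow along the play
  at rate at most lam + eps, resp. at least lam - h - eps; since Funk (x_k, x_0) and w (x_k)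
  differ by a bounded amount, these are bounds on the escape rate that each player can enforce.
*)

theory Submission
  imports Defs
begin

section \<open>The Funk metric of a cone\<close>

definition funk_ratios :: "'a::euclidean_space set \<Rightarrow> 'a \<Rightarrow> 'a \<Rightarrow> real set" where
  "funk_ratios C x y = {l. 0 < l \<and> l *\<^sub>R y - x \<in> C}"

lemma Funk_eq_ln_Inf_funk_ratios: "Funk C x y = ln (Inf (funk_ratios C x y))"
  by (simp add: Funk_def funk_ratios_def)

lemma bdd_below_funk_ratios: "bdd_below (funk_ratios C x y)"
  by (rule bdd_belowI[of _ 0]) (auto simp: funk_ratios_def)

locale funk_cone =
  fixes C :: "'a::euclidean_space set" and e :: 'a
  assumes convex: "convex C" and pointed: "pointed_cone C"
    and e_interior_dual: "e \<in> interior (dual_cone C)"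
begin

lemma cone: "cone C"
  using pointed by (simp add: pointed_cone_def)

lemma add_mem: "x \<in> C \<Longrightarrow> y \<in> C \<Longrightarrow> x + y \<in> C"
  using convex_cone convex cone by blast

lemma scaleR_mem: "x \<in> C \<Longrightarrow> 0 \<le> c \<Longrightarrow> c *\<^sub>R x \<in> C"
  using convex_cone convex cone by blast

lemma eq_0_if_uminus_mem: "x \<in> C \<Longrightarrow> - x \<in> C \<Longrightarrow> x = 0"
  using pointed by (force simp: pointed_cone_def)

lemma inner_e_nonneg: "x \<in> C \<Longrightarrow> 0 \<le> x \<bullet> e"
  using e_interior_dual interior_subset by (fastforce simp: dual_cone_def)

lemma inner_e_pos:
  assumes "x \<in> C" "x \<noteq> 0"
  shows "0 < x \<bullet> e"
proof -
  obtain r where r: "r > 0" "ball e r \<subseteq> dual_cone C"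
    using e_interior_dual by (auto simp: mem_interior)
  define y where "y = e - (r / 2 / norm x) *\<^sub>R x"
  have "dist e y = r / 2" using assms r by (simp add: y_def dist_norm)
  then have "y \<in> dual_cone C" using r by auto
  then have "0 \<le> x \<bullet> y" using assms by (simp add: dual_cone_def)
  also have "x \<bullet> y = x \<bullet> e - r / 2 * norm x"
    using assms by (simp add: y_def inner_diff_right power2_norm_eq_inner[symmetric] power2_eq_square)
  finally have "r / 2 * norm x \<le> x \<bullet> e" by simp
  moreover have "0 < r / 2 * norm x" using r assms by simp
  ultimately show ?thesis by linarith
qed

lemma zero_notin_interior: "0 \<notin> interior C"
proof
  assume "0 \<in> interior C"
  then obtain r where r: "r > 0" "ball 0 r \<subseteq> C" by (auto simp: mem_interior)
  obtain b :: 'a where b: "b \<in> Basis" using nonempty_Basis by blast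
  define u where "u = (r / 2) *\<^sub>R b"
  have "norm u = r / 2" using r b by (simp add: u_def)
  then have "u \<in> C" "- u \<in> C" "u \<noteq> 0" using r by auto
  then show False using eq_0_if_uminus_mem by blast
qed

lemma interior_inner_e_pos: "x \<in> interior C \<Longrightarrow> 0 < x \<bullet> e"
  using inner_e_pos interior_subset zero_notin_interior by blast

lemma scaleR_interior:
  assumes "x \<in> interior C" "0 < c"
  shows "c *\<^sub>R x \<in> interior C"
proof -
  have "rel_interior C = interior C" using assms(1) rel_interior_nonempty_interior by blast
  then have "c *\<^sub>R x \<in> {0} \<union> interior C"
    using cone_rel_interior[OF cone] assms by (metis Un_iff cone_def less_eq_real_def)
  then show ?thesis using assms zero_notin_interior by auto
qed

lemma rel_interior_cross_section_subset:
  assumes "interior C \<noteq> {}"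
  shows "rel_interior (cross_section C e) \<subseteq> interior C"
proof -
  obtain p where p: "p \<in> interior C" using assms by blast
  define H where "H = {x. e \<bullet> x = 1}"
  have "(1 / (p \<bullet> e)) *\<^sub>R p \<in> interior C \<inter> H"
    using scaleR_interior[OF p] interior_inner_e_pos[OF p] by (simp add: H_def inner_commute)
  then have "rel_interior C \<inter> rel_interior H \<noteq> {}"
    using rel_interior_nonempty_interior rel_interior_affine[OF affine_hyperplane] H_def by blast
  then have "rel_interior (C \<inter> H) \<subseteq> rel_interior C"
    using convex_rel_interior_inter_two[OF convex convex_hyperplane] H_def by blast
  moreover have "cross_section C e = C \<inter> H"
    by (auto simp: cross_section_def H_def inner_commute)
  ultimately show ?thesis using rel_interior_nonempty_interior[OF assms] by simp
qed

lemma funk_ratios_uniform_mem: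
  assumes "y \<in> interior C"
  obtains r where "0 < r" "\<And>x. (norm x + r) / r \<in> funk_ratios C x y"
proof -
  obtain r where r: "0 < r" "ball y r \<subseteq> C" using assms by (auto simp: mem_interior)
  have "(norm x + r) / r \<in> funk_ratios C x y" for x
  proof -
    define l where "l = (norm x + r) / r"
    have l: "0 < l" using r by (simp add: l_def add_nonneg_pos)
    have "norm ((1 / l) *\<^sub>R x) = norm x * r / (norm x + r)"
      using r l by (simp add: l_def)
    also have "\<dots> < r" using r by (simp add: divide_less_eq add_nonneg_pos)
    finally have "y - (1 / l) *\<^sub>R x \<in> C" using r by (auto simp: dist_norm)
    then have "l *\<^sub>R (y - (1 / l) *\<^sub>R x) \<in> C" using l by (intro scaleR_mem) auto
    then show ?thesis using l by (simp add: funk_ratios_def l_def[symmetric] scaleR_diff_right)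
  qed
  then show ?thesis using that r by blast
qed

lemma funk_ratios_nonempty: "y \<in> interior C \<Longrightarrow> funk_ratios C x y \<noteq> {}"
  using funk_ratios_uniform_mem by blast

lemma funk_ratios_mult:
  assumes "l1 \<in> funk_ratios C x y" "l2 \<in> funk_ratios C y z"
  shows "l1 * l2 \<in> funk_ratios C x z"
proof -
  have "l1 *\<^sub>R (l2 *\<^sub>R z - y) + (l1 *\<^sub>R y - x) \<in> C"
    using assms by (intro add_mem scaleR_mem) (auto simp: funk_ratios_def)
  moreover have "l1 *\<^sub>R (l2 *\<^sub>R z - y) + (l1 *\<^sub>R y - x) = (l1 * l2) *\<^sub>R z - x"
    by (simp add: algebra_simps)
  ultimately show ?thesis using assms by (auto simp: funk_ratios_def)
qed

lemma inner_e_ratio_le_Inf_funk_ratios: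
  assumes "y \<in> interior C"
  shows "(x \<bullet> e) / (y \<bullet> e) \<le> Inf (funk_ratios C x y)"
proof (rule cInf_greatest[OF funk_ratios_nonempty[OF assms]])
  fix l assume "l \<in> funk_ratios C x y"
  then have "0 \<le> (l *\<^sub>R y - x) \<bullet> e" using inner_e_nonneg by (simp add: funk_ratios_def)
  then show "(x \<bullet> e) / (y \<bullet> e) \<le> l"
    using interior_inner_e_pos[OF assms] by (simp add: inner_diff_left divide_le_eq)
qed

lemma Inf_funk_ratios_pos:
  assumes "x \<in> interior C" "y \<in> interior C"
  shows "0 < Inf (funk_ratios C x y)"
  using inner_e_ratio_le_Inf_funk_ratios[OF assms(2), of x] interior_inner_e_pos[OF assms(1)]
    interior_inner_e_pos[OF assms(2)] by (smt (verit) divide_pos_pos)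

lemma funk_ratios_scaleR_self:
  assumes "x \<in> interior C" "0 < c"
  shows "funk_ratios C (c *\<^sub>R x) x = {c..}"
proof -
  have "l *\<^sub>R x - c *\<^sub>R x \<in> C \<longleftrightarrow> c \<le> l" for l
  proof
    assume l: "l *\<^sub>R x - c *\<^sub>R x \<in> C"
    show "c \<le> l"
    proof (rule ccontr)
      assume "\<not> c \<le> l"
      then have "(1 / (c - l)) *\<^sub>R (l *\<^sub>R x - c *\<^sub>R x) \<in> C" using l by (intro scaleR_mem) auto
      also have "l *\<^sub>R x - c *\<^sub>R x = - ((c - l) *\<^sub>R x)" by (simp add: algebra_simps)
      also have "(1 / (c - l)) *\<^sub>R - ((c - l) *\<^sub>R x) = - x" using \<open>\<not> c \<le> l\<close> by simp
      finally show False
        using eq_0_if_uminus_mem interior_subset zero_notin_interior assms(1) by blast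
    qed
  qed (use scaleR_mem[of x "_ - c"] interior_subset assms(1) in \<open>auto simp: scaleR_diff_left\<close>)
  then show ?thesis using assms(2) by (auto simp: funk_ratios_def)
qed

lemma Funk_scaleR_self:
  assumes "x \<in> interior C" "0 < c"
  shows "Funk C (c *\<^sub>R x) x = ln c"
  using funk_ratios_scaleR_self[OF assms] by (simp add: Funk_eq_ln_Inf_funk_ratios)

lemma Funk_self: "x \<in> interior C \<Longrightarrow> Funk C x x = 0"
  using Funk_scaleR_self[of x 1] by simp

lemma Funk_triangle:
  assumes x: "x \<in> interior C" and y: "y \<in> interior C" and z: "z \<in> interior C"
  shows "Funk C x z \<le> Funk C x y + Funk C y z"
proof -
  define a b c where "a = Inf (funk_ratios C x y)" and "b = Inf (funk_ratios C y z)"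
    and "c = Inf (funk_ratios C x z)"
  have pos: "0 < a" "0 < b" "0 < c"
    using Inf_funk_ratios_pos x y z by (simp_all add: a_def b_def c_def)
  have "c / l2 \<le> a" if l2: "l2 \<in> funk_ratios C y z" for l2
    unfolding a_def
  proof (rule cInf_greatest[OF funk_ratios_nonempty[OF y]])
    fix l1 assume "l1 \<in> funk_ratios C x y"
    then have "c \<le> l1 * l2"
      unfolding c_def using funk_ratios_mult l2 by (intro cInf_lower bdd_below_funk_ratios)
    then show "c / l2 \<le> l1" using l2 by (simp add: funk_ratios_def pos_divide_le_eq)
  qed
  then have "c / a \<le> b"
    unfolding b_def using pos
    by (intro cInf_greatest[OF funk_ratios_nonempty[OF z]])
      (auto simp: funk_ratios_def pos_divide_le_eq pos_le_divide_eq mult.commute)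
  then have "ln c \<le> ln (a * b)" using pos by (simp add: pos_divide_le_eq mult.commute)
  then show ?thesis using pos by (simp add: Funk_eq_ln_Inf_funk_ratios a_def b_def c_def ln_mult)
qed

lemma Funk_scaleR_left:
  assumes x: "x \<in> interior C" and y: "y \<in> interior C" and c: "0 < c"
  shows "Funk C (c *\<^sub>R x) y = ln c + Funk C x y"
proof -
  have cx: "c *\<^sub>R x \<in> interior C" using scaleR_interior[OF x c] .
  have "Funk C x y \<le> Funk C ((1 / c) *\<^sub>R (c *\<^sub>R x)) (c *\<^sub>R x) + Funk C (c *\<^sub>R x) y"
    using Funk_triangle[OF x cx y] c by simp
  also have "Funk C ((1 / c) *\<^sub>R (c *\<^sub>R x)) (c *\<^sub>R x) = - ln c"
    using Funk_scaleR_self[OF cx, of "1 / c"] c by (simp add: ln_div)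
  finally show ?thesis
    using Funk_triangle[OF cx x y] Funk_scaleR_self[OF x c] by linarith
qed

lemma Funk_scaleR_right:
  assumes x: "x \<in> interior C" and y: "y \<in> interior C" and c: "0 < c"
  shows "Funk C x (c *\<^sub>R y) = Funk C x y - ln c"
proof -
  have cy: "c *\<^sub>R y \<in> interior C" using scaleR_interior[OF y c] .
  have "Funk C y (c *\<^sub>R y) = - ln c"
    using Funk_scaleR_left[OF cy cy, of "1 / c"] Funk_self[OF cy] c by (simp add: ln_div)
  then show ?thesis
    using Funk_triangle[OF x y cy] Funk_triangle[OF x cy y] Funk_scaleR_self[OF y c] by linarith
qed

lemma Hil_scaleR_left:
  assumes "x \<in> interior C" "y \<in> interior C" "0 < c"
  shows "Hil C (c *\<^sub>R x) y = Hil C x y"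
  using Funk_scaleR_left[OF assms] Funk_scaleR_right[OF assms(2,1,3)] by (simp add: Hil_def)

lemma ln_inner_e_diff_le_Funk:
  assumes "x \<in> interior C" "y \<in> interior C"
  shows "ln (x \<bullet> e) - ln (y \<bullet> e) \<le> Funk C x y"
proof -
  have "ln ((x \<bullet> e) / (y \<bullet> e)) \<le> Funk C x y"
    using inner_e_ratio_le_Inf_funk_ratios[OF assms(2), of x] Inf_funk_ratios_pos[OF assms]
      interior_inner_e_pos[OF assms(1)] interior_inner_e_pos[OF assms(2)]
    by (simp add: Funk_eq_ln_Inf_funk_ratios)
  then show ?thesis
    using interior_inner_e_pos[OF assms(1)] interior_inner_e_pos[OF assms(2)] by (simp add: ln_div)
qed

lemma bdd_above_Funk_image:
  assumes "bounded S" "S \<subseteq> interior C" "y \<in> interior C"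
  shows "bdd_above ((\<lambda>x. Funk C x y) ` S)"
proof -
  obtain R where R: "\<And>x. x \<in> S \<Longrightarrow> norm x \<le> R" using assms(1) by (auto simp: bounded_iff)
  obtain r where r: "0 < r" "\<And>x. (norm x + r) / r \<in> funk_ratios C x y"
    using funk_ratios_uniform_mem[OF assms(3)] by blast
  have "Funk C x y \<le> ln ((R + r) / r)" if "x \<in> S" for x
  proof -
    have "Inf (funk_ratios C x y) \<le> (norm x + r) / r"
      using r by (intro cInf_lower bdd_below_funk_ratios)
    also have "\<dots> \<le> (R + r) / r" using R[OF that] r by (simp add: divide_right_mono)
    finally have le: "Inf (funk_ratios C x y) \<le> (R + r) / r" .
    have "0 < Inf (funk_ratios C x y)" using Inf_funk_ratios_pos that assms(2,3) by blast
    with le show ?thesis by (simp add: Funk_eq_ln_Inf_funk_ratios)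
  qed
  then show ?thesis by (rule bdd_aboveI2)
qed

lemma bdd_below_Funk_image:
  assumes "compact S" "S \<subseteq> interior C" "y \<in> interior C"
  shows "bdd_below ((\<lambda>x. Funk C x y) ` S)"
proof (cases "S = {}")
  case False
  have "continuous_on S (\<lambda>x. x \<bullet> e)" by (intro continuous_intros)
  then obtain x0 where x0: "x0 \<in> S" "\<And>x. x \<in> S \<Longrightarrow> x0 \<bullet> e \<le> x \<bullet> e"
    using continuous_attains_inf[OF assms(1) False] by blast
  have "ln (x0 \<bullet> e) - ln (y \<bullet> e) \<le> Funk C x y" if "x \<in> S" for x
  proof -
    have "0 < x0 \<bullet> e" using x0(1) assms(2) interior_inner_e_pos by blast
    then have "ln (x0 \<bullet> e) \<le> ln (x \<bullet> e)" using x0(2)[OF that] by simp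
    then show ?thesis using ln_inner_e_diff_le_Funk[of x y] that assms(2,3) by auto
  qed
  then show ?thesis by (rule bdd_belowI2)
qed simp

end

section \<open>The upper interpolant\<close>

locale upper_interpolant = funk_cone +
  fixes Xh :: "'a::euclidean_space set" and v :: "'a \<Rightarrow> real"
  assumes Xh_finite: "finite Xh" and Xh_nonempty: "Xh \<noteq> {}" and Xh_interior: "Xh \<subseteq> interior C"
begin

abbreviation w :: "'a \<Rightarrow> real" where "w \<equiv> Iplus C Xh v"

lemma Iplus_le: "y \<in> Xh \<Longrightarrow> w z \<le> v y + Funk C z y"
  unfolding Iplus_def using Xh_finite by (intro Min_le) auto

lemma Iplus_attained:
  obtains y where "y \<in> Xh" "w z = v y + Funk C z y"
proof -
  have "w z \<in> (\<lambda>y. v y + Funk C z y) ` Xh"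
    unfolding Iplus_def using Xh_finite Xh_nonempty by (intro Min_in) auto
  then show ?thesis using that by blast
qed

lemma Iplus_le_plus_Funk:
  assumes "p \<in> interior C" "q \<in> interior C"
  shows "w p \<le> w q + Funk C p q"
proof -
  obtain y where y: "y \<in> Xh" "w q = v y + Funk C q y" using Iplus_attained .
  have "w p \<le> v y + Funk C p y" using Iplus_le[OF y(1)] .
  also have "\<dots> \<le> v y + Funk C p q + Funk C q y"
    using Funk_triangle[OF assms, of y] y Xh_interior by auto
  finally show ?thesis using y by simp
qed

lemma Iplus_scaleR:
  assumes z: "z \<in> interior C" and c: "0 < c"
  shows "w (c *\<^sub>R z) = ln c + w z"
proof -
  have "w (c *\<^sub>R z) = Min ((\<lambda>y. (v y + Funk C z y) + ln c) ` Xh)"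
    unfolding Iplus_def using Funk_scaleR_left[OF z _ c] Xh_interior
    by (intro arg_cong[where f = Min] image_cong) auto
  also have "\<dots> = w z + ln c"
    unfolding Iplus_def using Xh_finite Xh_nonempty by (rule Min_add_commute)
  finally show ?thesis by simp
qed

lemma Funk_le_Iplus_plus_const:
  assumes x0: "x0 \<in> interior C"
  obtains E where "\<And>z. z \<in> interior C \<Longrightarrow> Funk C z x0 \<le> w z + E"
proof
  fix z assume z: "z \<in> interior C"
  obtain y where y: "y \<in> Xh" "w z = v y + Funk C z y" using Iplus_attained .
  have "Funk C z x0 \<le> Funk C z y + Funk C y x0"
    using Funk_triangle[OF z _ x0] y Xh_interior by auto
  moreover have "Funk C y x0 - v y \<le> (MAX y\<in>Xh. Funk C y x0 - v y)"
    using y Xh_finite by (intro Max_ge) auto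
  ultimately show "Funk C z x0 \<le> w z + (MAX y\<in>Xh. Funk C y x0 - v y)" using y by linarith
qed

lemma bdd_above_Iplus_image:
  assumes "bounded S" "S \<subseteq> interior C"
  shows "bdd_above (w ` S)"
proof -
  obtain y where y: "y \<in> Xh" using Xh_nonempty by blast
  obtain U where "\<And>z. z \<in> S \<Longrightarrow> Funk C z y \<le> U"
    using bdd_above_Funk_image[OF assms, of y] y Xh_interior by (auto simp: bdd_above_def)
  then have "\<And>z. z \<in> S \<Longrightarrow> w z \<le> v y + U" using Iplus_le[OF y] by (smt (verit))
  then show ?thesis by (rule bdd_aboveI2)
qed

lemma bdd_below_Iplus_image:
  assumes "compact S" "S \<subseteq> interior C"
  shows "bdd_below (w ` S)"
proof -
  have "bdd_below ((\<lambda>z. v y + Funk C z y) ` S)" if y: "y \<in> Xh" for y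
  proof -
    obtain L where "\<And>z. z \<in> S \<Longrightarrow> L \<le> Funk C z y"
      using bdd_below_Funk_image[OF assms, of y] y Xh_interior by (auto simp: bdd_below_def)
    then show ?thesis by (intro bdd_belowI2[where m = "v y + L"]) auto
  qed
  then have "bdd_below (\<Union>y\<in>Xh. (\<lambda>z. v y + Funk C z y) ` S)" using Xh_finite by simp
  moreover have "w z \<in> (\<Union>y\<in>Xh. (\<lambda>z. v y + Funk C z y) ` S)" if "z \<in> S" for z
  proof -
    obtain y where "y \<in> Xh" "w z = v y + Funk C z y" using Iplus_attained .
    then show ?thesis using that by blast
  qed
  then have "w ` S \<subseteq> (\<Union>y\<in>Xh. (\<lambda>z. v y + Funk C z y) ` S)" by blast
  ultimately show ?thesis by (rule bdd_below_mono)
qed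

end

section \<open>The escape rate game\<close>

lemma le_of_increments_le:
  fixes f :: "nat \<Rightarrow> real"
  assumes "\<And>k. f (Suc k) \<le> f k + c"
  shows "f k \<le> f 0 + real k * c"
proof (induction k)
  case (Suc k)
  then have "f (Suc k) \<le> f 0 + real k * c + c" using assms[of k] by linarith
  then show ?case by (simp add: algebra_simps)
qed simp

lemma ge_of_increments_ge:
  fixes f :: "nat \<Rightarrow> real"
  assumes "\<And>k. f k + c \<le> f (Suc k)"
  shows "f 0 + real k * c \<le> f k"
proof (induction k)
  case (Suc k)
  then have "f 0 + real k * c + c \<le> f (Suc k)" using assms[of k] by linarith
  then show ?case by (simp add: algebra_simps)
qed simp

lemma limsup_ratio_le:
  fixes f :: "nat \<Rightarrow> real"
  assumes "\<And>k. f k \<le> real k * c + d"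
  shows "limsup (\<lambda>k. ereal (f k / real k)) \<le> ereal c"
proof -
  have "eventually (\<lambda>k. ereal (f k / real k) \<le> ereal (c + d / real k)) sequentially"
    using eventually_ge_at_top[of "1::nat"]
  proof eventually_elim
    case (elim k)
    then have "f k / real k \<le> (real k * c + d) / real k" using assms by (intro divide_right_mono) auto
    also have "\<dots> = c + d / real k" using elim by (simp add: field_simps)
    finally show ?case by simp
  qed
  moreover have "((\<lambda>k. ereal (c + d / real k)) \<longlongrightarrow> ereal c) sequentially"
    using tendsto_add[OF tendsto_const lim_const_over_n, of c d] by simp
  ultimately show ?thesis
    using Limsup_mono lim_imp_Limsup[OF trivial_limit_sequentially] by metis
qed

lemma limsup_ratio_ge:
  fixes f :: "nat \<Rightarrow> real"
  assumes "\<And>k. real k * c - d \<le> f k"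
  shows "ereal c \<le> limsup (\<lambda>k. ereal (f k / real k))"
proof -
  have "eventually (\<lambda>k. ereal (c - d / real k) \<le> ereal (f k / real k)) sequentially"
    using eventually_ge_at_top[of "1::nat"]
  proof eventually_elim
    case (elim k)
    have "c - d / real k = (real k * c - d) / real k" using elim by (simp add: field_simps)
    also have "\<dots> \<le> f k / real k" using assms elim by (intro divide_right_mono) auto
    finally show ?case by simp
  qed
  moreover have "((\<lambda>k. ereal (c - d / real k)) \<longlongrightarrow> ereal c) sequentially"
    using tendsto_diff[OF tendsto_const lim_const_over_n, of c d] by simp
  ultimately show ?thesis
    using Limsup_mono lim_imp_Limsup[OF trivial_limit_sequentially] by metis
qed

lemma game_state_Suc:
  "game_state T x (game_hist \<sigma> \<tau> (Suc k)) =
     T (\<sigma> (game_hist \<sigma> \<tau> k)) (\<tau> (game_hist \<sigma> \<tau> k) (\<sigma> (game_hist \<sigma> \<tau> k)))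
       (game_state T x (game_hist \<sigma> \<tau> k))"
  by (simp add: game_state_def)

lemma game_state_Nil [simp]: "game_state T x [] = x"
  by (simp add: game_state_def)

lemma game_state_invariant:
  assumes "\<sigma> \<in> min_strategies A" "\<tau> \<in> max_strategies B"
    and "\<And>a b x. a \<in> A \<Longrightarrow> b \<in> B \<Longrightarrow> x \<in> S \<Longrightarrow> T a b x \<in> S" and "x \<in> S"
  shows "game_state T x (game_hist \<sigma> \<tau> k) \<in> S"
proof (induction k)
  case (Suc k)
  then show ?case
    unfolding game_state_Suc using assms by (simp add: min_strategies_def max_strategies_def)
qed (use assms in simp)

locale escape_game = upper_interpolant +
  fixes A :: "'b set" and B :: "'c set" and T :: "'b \<Rightarrow> 'c \<Rightarrow> 'a \<Rightarrow> 'a" and K :: "'a set"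
    and h :: real and lam :: real
  assumes A_nonempty: "A \<noteq> {}" and B_nonempty: "B \<noteq> {}"
    and T_interior: "\<And>a b x. a \<in> A \<Longrightarrow> b \<in> B \<Longrightarrow> x \<in> interior C \<Longrightarrow> T a b x \<in> interior C"
    and T_nonexpansive: "\<And>a b x y. a \<in> A \<Longrightarrow> b \<in> B \<Longrightarrow> x \<in> interior C \<Longrightarrow> y \<in> interior C
      \<Longrightarrow> Funk C (T a b x) (T a b y) \<le> Funk C x y"
    and T_compact: "\<And>S. compact S \<Longrightarrow> S \<subseteq> interior C \<Longrightarrow>
      compact {T a b x | a b x. a \<in> A \<and> b \<in> B \<and> x \<in> S}"
    and K_cone: "cone K" and T_K: "\<And>a b. a \<in> A \<Longrightarrow> b \<in> B \<Longrightarrow> T a b ` K \<subseteq> K"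
    and Xh_K: "Xh \<subseteq> K"
    and Xh_net: "K \<inter> cross_section C e \<subseteq> (\<Union>y\<in>Xh. {x. Hil C x y < h})"
    and fixpoint: "\<And>x. x \<in> Xh \<Longrightarrow> ShapleyF A B T e w x = lam + v x"
begin

lemma game_state_interior:
  assumes "\<sigma> \<in> min_strategies A" "\<tau> \<in> max_strategies B" "x \<in> interior C"
  shows "game_state T x (game_hist \<sigma> \<tau> k) \<in> interior C"
  using game_state_invariant[OF assms(1,2) _ assms(3)] T_interior by blast

lemma game_state_K:
  assumes "\<sigma> \<in> min_strategies A" "\<tau> \<in> max_strategies B" "x \<in> K"
  shows "game_state T x (game_hist \<sigma> \<tau> k) \<in> K"
  using game_state_invariant[OF assms(1,2) _ assms(3)] T_K by blast

lemma Funk_game_state_le: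
  assumes \<sigma>: "\<sigma> \<in> min_strategies A" and \<tau>: "\<tau> \<in> max_strategies B"
    and x: "x \<in> interior C" and y: "y \<in> interior C"
  shows "Funk C (game_state T x (game_hist \<sigma> \<tau> k)) (game_state T y (game_hist \<sigma> \<tau> k)) \<le> Funk C x y"
proof (induction k)
  case (Suc k)
  let ?hist = "game_hist \<sigma> \<tau> k"
  have "\<sigma> ?hist \<in> A" "\<tau> ?hist (\<sigma> ?hist) \<in> B"
    using \<sigma> \<tau> by (auto simp: min_strategies_def max_strategies_def)
  then show ?case
    unfolding game_state_Suc
    using T_nonexpansive game_state_interior[OF \<sigma> \<tau> x] game_state_interior[OF \<sigma> \<tau> y] Suc.IH
    by (meson order_trans)
qed simp

lemma ShapleyF_Iplus:
  assumes "x \<in> interior C"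
  shows "ShapleyF A B T e w x = (INF a\<in>A. SUP b\<in>B. w (T a b x))"
proof -
  have "ln (z \<bullet> e) + w ((1 / (z \<bullet> e)) *\<^sub>R z) = w z" if "z \<in> interior C" for z
    using Iplus_scaleR[OF that, of "1 / (z \<bullet> e)"] interior_inner_e_pos[OF that] by (simp add: ln_div)
  then show ?thesis
    unfolding ShapleyF_def using T_interior assms by (intro INF_cong SUP_cong) auto
qed

lemma INF_SUP_Iplus_eq:
  assumes "x \<in> Xh"
  shows "(INF a\<in>A. SUP b\<in>B. w (T a b x)) = lam + v x"
  using fixpoint[OF assms] ShapleyF_Iplus[of x] assms Xh_interior by auto

lemma Iplus_T_bounds:
  assumes "x \<in> interior C"
  obtains L U where "\<And>a b. a \<in> A \<Longrightarrow> b \<in> B \<Longrightarrow> L \<le> w (T a b x)"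
    and "\<And>a b. a \<in> A \<Longrightarrow> b \<in> B \<Longrightarrow> w (T a b x) \<le> U"
proof -
  define S where "S = {T a b z | a b z. a \<in> A \<and> b \<in> B \<and> z \<in> {x}}"
  have "compact S" unfolding S_def using assms by (intro T_compact) auto
  moreover have "S \<subseteq> interior C" unfolding S_def using assms T_interior by auto
  ultimately have "bdd_below (w ` S)" "bdd_above (w ` S)"
    by (simp_all add: bdd_below_Iplus_image bdd_above_Iplus_image compact_imp_bounded)
  then obtain L U where "\<And>z. z \<in> S \<Longrightarrow> L \<le> w z" "\<And>z. z \<in> S \<Longrightarrow> w z \<le> U"
    unfolding bdd_below_def bdd_above_def by blast
  moreover have "T a b x \<in> S" if "a \<in> A" "b \<in> B" for a b
    unfolding S_def using that by blast
  ultimately show ?thesis using that by blast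
qed

lemma bdd_above_Iplus_T:
  assumes "x \<in> interior C" "a \<in> A"
  shows "bdd_above ((\<lambda>b. w (T a b x)) ` B)"
proof -
  obtain U where "\<And>b. b \<in> B \<Longrightarrow> w (T a b x) \<le> U" using Iplus_T_bounds[OF assms(1)] assms(2) by metis
  then show ?thesis by (rule bdd_aboveI2)
qed

lemma bdd_below_SUP_Iplus_T:
  assumes "x \<in> interior C"
  shows "bdd_below ((\<lambda>a. SUP b\<in>B. w (T a b x)) ` A)"
proof -
  obtain L where L: "\<And>a b. a \<in> A \<Longrightarrow> b \<in> B \<Longrightarrow> L \<le> w (T a b x)"
    using Iplus_T_bounds[OF assms] by metis
  obtain b0 where b0: "b0 \<in> B" using B_nonempty by blast
  have "L \<le> (SUP b\<in>B. w (T a b x))" if "a \<in> A" for a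
    using L[OF that b0] cSUP_upper[OF b0 bdd_above_Iplus_T[OF assms that]] by linarith
  then show ?thesis by (rule bdd_belowI2)
qed

lemma exists_min_action:
  assumes y: "y \<in> interior C" and \<epsilon>: "0 < \<epsilon>"
  shows "\<exists>a\<in>A. \<forall>b\<in>B. w (T a b y) \<le> w y + (lam + \<epsilon>)"
proof -
  obtain y' where y': "y' \<in> Xh" "w y = v y' + Funk C y y'" using Iplus_attained .
  have y'_int: "y' \<in> interior C" using y' Xh_interior by auto
  have "(INF a\<in>A. SUP b\<in>B. w (T a b y')) < lam + v y' + \<epsilon>"
    using INF_SUP_Iplus_eq[OF y'(1)] \<epsilon> by simp
  then obtain a where a: "a \<in> A" "(SUP b\<in>B. w (T a b y')) < lam + v y' + \<epsilon>"
    using cINF_less_iff[OF A_nonempty bdd_below_SUP_Iplus_T[OF y'_int]] by blast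
  have "w (T a b y) \<le> w y + (lam + \<epsilon>)" if b: "b \<in> B" for b
  proof -
    have "w (T a b y) \<le> w (T a b y') + Funk C (T a b y) (T a b y')"
      using Iplus_le_plus_Funk T_interior a b y y'_int by auto
    also have "Funk C (T a b y) (T a b y') \<le> Funk C y y'"
      using T_nonexpansive a b y y'_int by auto
    also have "w (T a b y') \<le> (SUP b\<in>B. w (T a b y'))"
      using bdd_above_Iplus_T[OF y'_int a(1)] b by (intro cSUP_upper)
    finally show ?thesis using a y' by linarith
  qed
  then show ?thesis using a by blast
qed

lemma exists_max_action:
  assumes y: "y \<in> interior C" "y \<in> K" and a: "a \<in> A" and \<epsilon>: "0 < \<epsilon>"
  shows "\<exists>b\<in>B. w y + (lam - h - \<epsilon>) \<le> w (T a b y)"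
proof -
  define c where "c = y \<bullet> e"
  have c: "0 < c" using interior_inner_e_pos[OF y(1)] by (simp add: c_def)
  define y1 where "y1 = (1 / c) *\<^sub>R y"
  have y1_int: "y1 \<in> interior C" using scaleR_interior[OF y(1)] c by (simp add: y1_def)
  have "y1 \<in> K \<inter> cross_section C e"
    using K_cone y(2) c interior_subset y1_int
    by (auto simp: y1_def c_def cone_def cross_section_def)
  then obtain y' where y': "y' \<in> Xh" "Hil C y1 y' < h" using Xh_net by blast
  have y'_int: "y' \<in> interior C" using y' Xh_interior by auto
  have "Hil C y y' = Hil C y1 y'"
    using Hil_scaleR_left[OF y1_int y'_int c] c by (simp add: y1_def)
  then have hil: "Funk C y y' + Funk C y' y < h" using y'(2) by (simp add: Hil_def)
  have "lam + v y' \<le> (SUP b\<in>B. w (T a b y'))"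
    using INF_SUP_Iplus_eq[OF y'(1)] cINF_lower[OF bdd_below_SUP_Iplus_T[OF y'_int] a] by simp
  then obtain b where b: "b \<in> B" "lam + v y' - \<epsilon> < w (T a b y')"
    using less_cSUP_iff[OF B_nonempty bdd_above_Iplus_T[OF y'_int a]] \<epsilon> by (smt (verit))
  have "w (T a b y') \<le> w (T a b y) + Funk C (T a b y') (T a b y)"
    using Iplus_le_plus_Funk T_interior a b y y'_int by auto
  also have "Funk C (T a b y') (T a b y) \<le> Funk C y' y"
    using T_nonexpansive a b y y'_int by auto
  finally have "w y + (lam - h - \<epsilon>) \<le> w (T a b y)"
    using b hil Iplus_le[OF y'(1), of y] by linarith
  then show ?thesis using b by blast
qed

lemma min_player_guarantee:
  assumes x0: "x0 \<in> interior C" and \<epsilon>: "0 < \<epsilon>"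
  obtains \<sigma> where "\<sigma> \<in> min_strategies A"
    and "\<And>\<tau>. \<tau> \<in> max_strategies B \<Longrightarrow> escape_payoff C T x0 \<sigma> \<tau> \<le> ereal (lam + \<epsilon>)"
proof -
  have "\<exists>a. a \<in> A \<and> (y \<in> interior C \<longrightarrow> (\<forall>b\<in>B. w (T a b y) \<le> w y + (lam + \<epsilon>)))" for y
    using exists_min_action[OF _ \<epsilon>, of y] A_nonempty by blast
  then obtain \<alpha> where \<alpha>: "\<And>y. \<alpha> y \<in> A"
    "\<And>y b. y \<in> interior C \<Longrightarrow> b \<in> B \<Longrightarrow> w (T (\<alpha> y) b y) \<le> w y + (lam + \<epsilon>)"
    by metis
  define \<sigma> where "\<sigma> hist = \<alpha> (game_state T x0 hist)" for hist
  have \<sigma>: "\<sigma> \<in> min_strategies A" using \<alpha>(1) by (simp add: min_strategies_def \<sigma>_def)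
  obtain E where E: "\<And>z. z \<in> interior C \<Longrightarrow> Funk C z x0 \<le> w z + E"
    using Funk_le_Iplus_plus_const[OF x0] by blast
  have "escape_payoff C T x0 \<sigma> \<tau> \<le> ereal (lam + \<epsilon>)" if \<tau>: "\<tau> \<in> max_strategies B" for \<tau>
  proof -
    define x where "x k = game_state T x0 (game_hist \<sigma> \<tau> k)" for k
    have x_int: "x k \<in> interior C" for k
      unfolding x_def using game_state_interior[OF \<sigma> \<tau> x0] .
    have "w (x (Suc k)) \<le> w (x k) + (lam + \<epsilon>)" for k
      using \<alpha>(2)[OF x_int[of k]] \<tau> unfolding x_def game_state_Suc \<sigma>_def max_strategies_def by auto
    then have "w (x k) \<le> w (x 0) + real k * (lam + \<epsilon>)" for k
      by (rule le_of_increments_le)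
    then have "w (x k) \<le> w x0 + real k * (lam + \<epsilon>)" for k
      by (simp add: x_def)
    then have "Funk C (x k) x0 \<le> real k * (lam + \<epsilon>) + (w x0 + E)" for k
      using E[OF x_int[of k]] by (smt (verit))
    then have "limsup (\<lambda>k. ereal (Funk C (x k) x0 / real k)) \<le> ereal (lam + \<epsilon>)"
      by (rule limsup_ratio_le)
    then show ?thesis by (simp add: escape_payoff_def x_def)
  qed
  with \<sigma> that show ?thesis by blast
qed

text \<open>Max steers by a shadow play started in \<open>Xh \<subseteq> K\<close>, since \<open>x0\<close> need not lie in \<open>K\<close>;
  nonexpansiveness keeps the actual play within Funk distance \<open>Funk C y0 x0\<close> of it.\<close>

lemma max_player_guarantee:
  assumes x0: "x0 \<in> interior C" and \<epsilon>: "0 < \<epsilon>"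
  obtains \<tau> where "\<tau> \<in> max_strategies B"
    and "\<And>\<sigma>. \<sigma> \<in> min_strategies A \<Longrightarrow> ereal (lam - h - \<epsilon>) \<le> escape_payoff C T x0 \<sigma> \<tau>"
proof -
  obtain y0 where y0: "y0 \<in> Xh" using Xh_nonempty by blast
  have y0_int: "y0 \<in> interior C" and y0_K: "y0 \<in> K" using y0 Xh_interior Xh_K by auto
  have "\<exists>b. b \<in> B \<and> (y \<in> interior C \<and> y \<in> K \<and> a \<in> A \<longrightarrow> w y + (lam - h - \<epsilon>) \<le> w (T a b y))"
    for y a
    using exists_max_action[OF _ _ _ \<epsilon>, of y a] B_nonempty by blast
  then obtain \<beta> where \<beta>: "\<And>y a. \<beta> y a \<in> B"
    "\<And>y a. y \<in> interior C \<Longrightarrow> y \<in> K \<Longrightarrow> a \<in> A \<Longrightarrow> w y + (lam - h - \<epsilon>) \<le> w (T a (\<beta> y a) y)"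
    by metis
  define \<tau> where "\<tau> hist a = \<beta> (game_state T y0 hist) a" for hist a
  have \<tau>: "\<tau> \<in> max_strategies B" using \<beta>(1) by (simp add: max_strategies_def \<tau>_def)
  have "ereal (lam - h - \<epsilon>) \<le> escape_payoff C T x0 \<sigma> \<tau>" if \<sigma>: "\<sigma> \<in> min_strategies A" for \<sigma>
  proof -
    define x where "x k = game_state T x0 (game_hist \<sigma> \<tau> k)" for k
    define y where "y k = game_state T y0 (game_hist \<sigma> \<tau> k)" for k
    have x_int: "x k \<in> interior C" for k
      unfolding x_def using game_state_interior[OF \<sigma> \<tau> x0] .
    have y_int: "y k \<in> interior C" for k
      unfolding y_def using game_state_interior[OF \<sigma> \<tau> y0_int] .
    have y_K: "y k \<in> K" for k
      unfolding y_def using game_state_K[OF \<sigma> \<tau> y0_K] .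
    have "w (y k) + (lam - h - \<epsilon>) \<le> w (y (Suc k))" for k
      using \<beta>(2)[OF y_int[of k] y_K[of k]] \<sigma>
      unfolding y_def game_state_Suc \<tau>_def min_strategies_def by auto
    then have "w (y 0) + real k * (lam - h - \<epsilon>) \<le> w (y k)" for k
      by (rule ge_of_increments_ge)
    moreover have "y 0 = y0" by (simp add: y_def)
    moreover have "w (y k) \<le> w (x k) + Funk C y0 x0" for k
      using Iplus_le_plus_Funk[OF y_int x_int, of k k] Funk_game_state_le[OF \<sigma> \<tau> y0_int x0, of k]
      by (simp add: x_def y_def)
    moreover have "w (x k) \<le> w x0 + Funk C (x k) x0" for k
      using Iplus_le_plus_Funk[OF x_int x0] .
    ultimately have "real k * (lam - h - \<epsilon>) - (Funk C y0 x0 + w x0 - w y0) \<le> Funk C (x k) x0" for k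
      by (smt (verit))
    then have "ereal (lam - h - \<epsilon>) \<le> limsup (\<lambda>k. ereal (Funk C (x k) x0 / real k))"
      by (rule limsup_ratio_ge)
    then show ?thesis by (simp add: escape_payoff_def x_def)
  qed
  with \<tau> that show ?thesis by blast
qed

lemma escape_value_le:
  assumes x0: "x0 \<in> interior C" and \<rho>: "is_escape_value C A B T x0 \<rho>"
  shows "\<rho> \<le> lam"
proof (rule field_le_epsilon)
  fix \<epsilon> :: real assume "0 < \<epsilon>"
  then have \<epsilon>: "0 < \<epsilon> / 2" by simp
  obtain \<tau>' where \<tau>': "\<tau>' \<in> max_strategies B"
    "\<And>\<sigma>. \<sigma> \<in> min_strategies A \<Longrightarrow> ereal (\<rho> - \<epsilon> / 2) \<le> escape_payoff C T x0 \<sigma> \<tau>'"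
    using \<rho> \<epsilon> unfolding is_escape_value_def by blast
  obtain \<sigma> where "\<sigma> \<in> min_strategies A" "escape_payoff C T x0 \<sigma> \<tau>' \<le> ereal (lam + \<epsilon> / 2)"
    using min_player_guarantee[OF x0 \<epsilon>] \<tau>'(1) by metis
  with \<tau>'(2) have "ereal (\<rho> - \<epsilon> / 2) \<le> ereal (lam + \<epsilon> / 2)" by (meson order_trans)
  then show "\<rho> \<le> lam + \<epsilon>" by simp
qed

lemma escape_value_ge:
  assumes x0: "x0 \<in> interior C" and \<rho>: "is_escape_value C A B T x0 \<rho>"
  shows "lam - h \<le> \<rho>"
proof (rule field_le_epsilon)
  fix \<epsilon> :: real assume "0 < \<epsilon>"
  then have \<epsilon>: "0 < \<epsilon> / 2" by simp
  obtain \<sigma>' where \<sigma>': "\<sigma>' \<in> min_strategies A"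
    "\<And>\<tau>. \<tau> \<in> max_strategies B \<Longrightarrow> escape_payoff C T x0 \<sigma>' \<tau> \<le> ereal (\<rho> + \<epsilon> / 2)"
    using \<rho> \<epsilon> unfolding is_escape_value_def by blast
  obtain \<tau> where "\<tau> \<in> max_strategies B" "ereal (lam - h - \<epsilon> / 2) \<le> escape_payoff C T x0 \<sigma>' \<tau>"
    using max_player_guarantee[OF x0 \<epsilon>] \<sigma>'(1) by metis
  with \<sigma>'(2) have "ereal (lam - h - \<epsilon> / 2) \<le> ereal (\<rho> + \<epsilon> / 2)" by (meson order_trans)
  then show "lam - h \<le> \<rho> + \<epsilon>" by simp
qed

end

theorem theorem5:
  fixes C :: "'a::euclidean_space set"
    and e :: 'a
    and A :: "'b::topological_space set"
    and B :: "'c::topological_space set"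
    and T :: "'b \<Rightarrow> 'c \<Rightarrow> 'a \<Rightarrow> 'a"
    and K :: "'a set"
    and h :: real
    and Xh :: "'a set"
    and v :: "'a \<Rightarrow> real"
    and lam :: real
  assumes C_closed: "closed C" and C_convex: "convex C" and C_pointed: "pointed_cone C"
    and e_int: "e \<in> interior (dual_cone C)"
    and A_ne: "A \<noteq> {}" and A_compact: "compact A"
    and B_ne: "B \<noteq> {}" and B_compact: "compact B"
    and T_self: "\<And>a b x. a \<in> A \<Longrightarrow> b \<in> B \<Longrightarrow> x \<in> interior C \<Longrightarrow> T a b x \<in> interior C"
    and T_nonexp: "\<And>a b x y. a \<in> A \<Longrightarrow> b \<in> B \<Longrightarrow> x \<in> interior C \<Longrightarrow> y \<in> interior C
                     \<Longrightarrow> Funk C (T a b x) (T a b y) \<le> Funk C x y"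
    and T_cont_a: "\<And>b x. b \<in> B \<Longrightarrow> x \<in> interior C \<Longrightarrow> continuous_on A (\<lambda>a. T a b x)"
    and T_cont_b: "\<And>a x. a \<in> A \<Longrightarrow> x \<in> interior C \<Longrightarrow> continuous_on B (\<lambda>b. T a b x)"
    and T_compact: "\<And>K'. compact K' \<Longrightarrow> K' \<subseteq> interior C \<Longrightarrow>
                     compact {T a b x | a b x. a \<in> A \<and> b \<in> B \<and> x \<in> K'}"
    and T_ext: "\<And>a b. a \<in> A \<Longrightarrow> b \<in> B \<Longrightarrow> continuous_on C (T a b)"
    and K_closed: "closed K" and K_cone: "cone K" and K_sub: "K \<subseteq> C"
    and K_inv: "\<And>a b. a \<in> A \<Longrightarrow> b \<in> B \<Longrightarrow> T a b ` K \<subseteq> K"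
    and X_relint: "K \<inter> cross_section C e \<subseteq> rel_interior (cross_section C e)"
    and h_pos: "h > 0"
    and Xh_finite: "finite Xh" and Xh_ne: "Xh \<noteq> {}"
    and Xh_sub: "Xh \<subseteq> K \<inter> cross_section C e"
    and Xh_net: "K \<inter> cross_section C e \<subseteq> (\<Union>y\<in>Xh. {x. Hil C x y < h})"
    and v_lip: "v \<in> Lip1 C Xh"
    and fixpt: "\<And>x. x \<in> Xh \<Longrightarrow> ShapleyF A B T e (Iplus C Xh v) x = lam + v x"
  shows "\<forall>x0\<in>interior C. \<forall>\<rho>. is_escape_value C A B T x0 \<rho> \<longrightarrow> lam - h \<le> \<rho> \<and> \<rho> \<le> lam"
proof (intro ballI allI impI)
  fix x0 \<rho> assume x0: "x0 \<in> interior C" and \<rho>: "is_escape_value C A B T x0 \<rho>"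
  interpret funk_cone C e
    using C_convex C_pointed e_int by unfold_locales
  have "Xh \<subseteq> interior C"
    using Xh_sub X_relint rel_interior_cross_section_subset x0 by blast
  interpret escape_game C e Xh v A B T K h lam
    using Xh_finite Xh_ne A_ne B_ne T_self T_nonexp T_compact K_cone K_inv Xh_sub Xh_net fixpt
      \<open>Xh \<subseteq> interior C\<close>
    by unfold_locales auto
  show "lam - h \<le> \<rho> \<and> \<rho> \<le> lam"
    using escape_value_ge[OF x0 \<rho>] escape_value_le[OF x0 \<rho>] by blast
qed

end
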